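(* For any positive integer $n$, as formal power series in $z$, \[ \begin{aligned} \frac{ (-tzq;q)_{n} }{ (zq;q)_{n} } &= 1+ \sum_{m=1}^{n-1} \left( \overline{ {n+m-1 \brack 2m } }_{q,t} + t\, \overline{ {n+m-2 \brack 2m-1 } }_{q,t} \right) z^{2m} q^{2m^2+2m} \frac{ (-tzq;q)_{m} }{(zq;q)_{m}} \\ &\quad+\sum_{m=1}^{n} \overline{ {n+m-1 \brack 2m-1 } }_{q,t} z^{2m-1} q^{2m^2 - m} \frac{ (-tzq;q)_{m} }{(zq;q)_{m}} \\&\quad + \sum_{m=1}^{n} \overline{ {n+m-2 \brack 2m-2 } }_{q,t}\, t z^{2m-1} q^{2m^2-m} \frac{ (-tzq;q)_{m-1} }{(zq;q)_{m-1}} . \end{aligned} \]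
   Context: An overpartition is a partition in which the last occurrence of each distinct part size may be overlined; its weight $|\lambda|$ is the sum of its parts. For integers $0\le b\le a$, $\overline{{a \brack b}}_{q,t}=\sum_{\lambda} t^{\#_o(\lambda)} q^{|\lambda|}$, the sum over all overpartitions $\lambda$ with largest part at most $a-b$ and at most $b$ parts, $\#_o(\lambda)$ being the number of overlined parts; for other integer pairs $(a,b)$ it is $0$. $(x;q)_k=\prod_{j=1}^k(1-xq^{j-1})$, $(x;q)_0=1$. *)

theory Defs
  imports Main "HOL-Library.Multiset" "HOL-Computational_Algebra.Formal_Power_Series"
begin

definition qpoch :: "'a::comm_ring_1 \<Rightarrow> 'a \<Rightarrow> nat \<Rightarrow> 'a" where
  "qpoch x q k = (\<Prod>j<k. (1 - x * q ^ j))"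

text \<open>An overpartition is a finite multiset of positive parts together with the set O of
  part sizes whose last occurrence is overlined (O must be a subset of the occurring sizes).\<close>
definition overparts :: "nat \<Rightarrow> nat \<Rightarrow> (nat multiset \<times> nat set) set" where
  "overparts L N = {(lam, ov). 0 \<notin># lam \<and> (\<forall>x\<in>#lam. x \<le> L) \<and> size lam \<le> N
                               \<and> ov \<subseteq> set_mset lam}"

definition ovbin :: "'a::comm_ring_1 \<Rightarrow> 'a \<Rightarrow> int \<Rightarrow> int \<Rightarrow> 'a" where
  "ovbin q t a b = (if 0 \<le> b \<and> b \<le> a then
      (\<Sum>(lam, ov)\<in>overparts (nat (a - b)) (nat b). t ^ card ov * q ^ sum_mset lam)
    else 0)"

end

theory Submission
  imports Defs
begin

text \<open>
  Write \<open>P(a, b)\<close> for the overpartition binomial and \<open>R\<^sub>k\<close> for the quotient of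
  q-Pochhammer symbols. Since \<open>R\<^sub>0 = 1\<close> and \<open>(1 - q\<^sup>n z) R\<^sub>n = (1 + t q\<^sup>n z) R\<^sub>n\<^sub>-\<^sub>1\<close>, it
  suffices to show that the right-hand side \<open>S\<^sub>n\<close> obeys the same recursion. Multiplying
  the \<open>m\<close>-th summand of \<open>S\<^sub>n\<^sub>-\<^sub>1\<close> by \<open>1 + t q\<^sup>n z\<close> and subtracting the \<open>m\<close>-th summand of \<open>S\<^sub>n\<close>
  times \<open>1 - q\<^sup>n z\<close> gives a difference \<open>T(n, m + 1) - T(n, m)\<close>, so the sum telescopes, and
  \<open>T(n, 1) = (1 + t) q\<^sup>n z\<close> cancels the contribution of the constant term 1.

  The summand identity is a ring identity once two Pascal-type recurrences for \<open>P\<close> are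
  available. Splitting off the largest possible part \<open>L = a - b\<close> (absent, present but not
  overlined, or overlined) gives
  \<open>P(a, b) = P(a - 1, b) + q\<^sup>a\<^sup>-\<^sup>b (P(a - 1, b - 1) + t P(a - 2, b - 1))\<close>;
  the dual recurrence
  \<open>P(a, b) = P(a - 1, b - 1) + q\<^sup>b (P(a - 1, b) + t P(a - 2, b - 1))\<close>
  follows from it by induction on \<open>a\<close>.
\<close>

section \<open>Overpartitions in a box\<close>

definition overpart_gf :: "'a::comm_ring_1 \<Rightarrow> 'a \<Rightarrow> nat \<Rightarrow> nat \<Rightarrow> 'a" where
  "overpart_gf q t L N = (\<Sum>(lam, ov)\<in>overparts L N. t ^ card ov * q ^ sum_mset lam)"

lemma finite_overparts: "finite (overparts L N)"
proof (rule finite_subset)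
  show "overparts L N \<subseteq> (\<Union>k\<le>N. multisets_of_size {..L} k) \<times> Pow {..L}"
    by (auto simp: overparts_def multisets_of_size_def)
qed auto

lemma overparts_0_left: "overparts 0 N = {({#}, {})}"
  by (auto simp: overparts_def) (metis multiset_nonemptyE)

lemma overparts_0_right: "overparts L 0 = {({#}, {})}"
  by (auto simp: overparts_def)

lemma overparts_notin_above:
  assumes "(lam, ov) \<in> overparts L N" "L < k"
  shows "k \<notin># lam" "k \<notin> ov"
proof -
  have "\<forall>x\<in>#lam. x \<le> L" "ov \<subseteq> set_mset lam"
    using assms(1) by (auto simp: overparts_def)
  moreover from this have "k \<notin># lam"
    using assms(2) by auto
  ultimately show "k \<notin># lam" "k \<notin> ov"
    by auto
qed

lemma overparts_shrink:
  assumes "(lam, ov) \<in> overparts L N" "L \<notin># lam"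
  shows "(lam, ov) \<in> overparts (L - 1) N"
proof -
  have "x \<le> L - 1" if "x \<in># lam" for x
  proof -
    have "x \<le> L" "x \<noteq> L"
      using that assms by (auto simp: overparts_def)
    then show ?thesis by linarith
  qed
  then show ?thesis
    using assms(1) by (simp add: overparts_def)
qed

lemma overparts_split_largest:
  assumes "0 < L" "0 < N"
  shows "overparts L N = overparts (L - 1) N
     \<union> (\<lambda>(mu, ov). (add_mset L mu, ov)) ` overparts L (N - 1)
     \<union> (\<lambda>(mu, ov). (add_mset L mu, insert L ov)) ` overparts (L - 1) (N - 1)"
    (is "_ = ?A \<union> ?B \<union> ?C")
proof
  show "overparts L N \<subseteq> ?A \<union> ?B \<union> ?C"
  proof
    fix p assume "p \<in> overparts L N"
    then obtain lam ov where p: "p = (lam, ov)" "(lam, ov) \<in> overparts L N"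
      by (cases p) auto
    show "p \<in> ?A \<union> ?B \<union> ?C"
    proof (cases "p \<in> ?A \<union> ?B")
      case False
      then have "L \<in># lam"
        using p overparts_shrink by blast
      define mu where "mu = lam - {#L#}"
      have lam: "lam = add_mset L mu"
        using \<open>L \<in># lam\<close> by (simp add: mu_def)
      have "(mu, ov) \<notin> overparts L (N - 1)"
        using False p lam by (auto intro: rev_image_eqI)
      then have "L \<in> ov" "L \<notin># mu"
        using p lam assms by (auto simp: overparts_def)
      moreover have "(mu, ov - {L}) \<in> overparts L (N - 1)"
        using p lam by (auto simp: overparts_def)
      ultimately have "(mu, ov - {L}) \<in> overparts (L - 1) (N - 1)"
        using overparts_shrink by blast
      moreover have "p = (add_mset L mu, insert L (ov - {L}))"
        using p lam \<open>L \<in> ov\<close> by auto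
      ultimately show ?thesis
        by (auto intro: rev_image_eqI)
    qed simp
  qed
  show "?A \<union> ?B \<union> ?C \<subseteq> overparts L N"
    using assms by (auto simp: overparts_def) (meson diff_le_self le_trans)+
qed

lemma overparts_split_largest_disjoint:
  fixes L N :: nat
  assumes "0 < L"
  defines "A \<equiv> overparts (L - 1) N"
    and "B \<equiv> (\<lambda>(mu, ov). (add_mset L mu, ov)) ` overparts L (N - 1)"
    and "C \<equiv> (\<lambda>(mu, ov). (add_mset L mu, insert L ov)) ` overparts (L - 1) (N - 1)"
  shows "A \<inter> B = {}" "(A \<union> B) \<inter> C = {}"
proof -
  have below: "L \<notin># mu" if "(mu, ov) \<in> overparts (L - 1) N'" for mu ov N'
    using overparts_notin_above(1)[OF that] assms by auto
  have "p \<notin> A" if "p \<in> B \<union> C" for p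
    using that below[of "add_mset L _" _ N] by (auto simp: A_def B_def C_def)
  moreover have "p \<notin> B" if "p \<in> C" for p
  proof
    assume "p \<in> B"
    with that obtain mu ov where "(mu, ov) \<in> overparts (L - 1) (N - 1)" "(mu, insert L ov) \<in> overparts L (N - 1)"
      by (auto simp: B_def C_def)
    then show False
      using below by (auto simp: overparts_def)
  qed
  ultimately show "A \<inter> B = {}" "(A \<union> B) \<inter> C = {}"
    by blast+
qed

lemma overpart_gf_rec:
  fixes q t :: "'a::comm_ring_1"
  assumes "0 < L" "0 < N"
  shows "overpart_gf q t L N = overpart_gf q t (L - 1) N
           + q ^ L * (overpart_gf q t L (N - 1) + t * overpart_gf q t (L - 1) (N - 1))"
proof -
  let ?w = "\<lambda>(lam, ov). t ^ card ov * q ^ sum_mset lam"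
  let ?plain = "\<lambda>(mu, ov). (add_mset L mu, ov)"
  let ?over = "\<lambda>(mu, ov). (add_mset L mu, insert L ov)"
  let ?A = "overparts (L - 1) N"
  let ?B = "?plain ` overparts L (N - 1)"
  let ?C = "?over ` overparts (L - 1) (N - 1)"
  have below: "L \<notin># mu" "L \<notin> ov" if "(mu, ov) \<in> overparts (L - 1) N'" for mu ov N'
    using overparts_notin_above[OF that] assms by auto
  have inj_plain: "inj_on ?plain (overparts L (N - 1))"
    by (rule inj_onI) auto
  have B: "sum ?w ?B = q ^ L * overpart_gf q t L (N - 1)"
    unfolding sum.reindex[OF inj_plain] overpart_gf_def sum_distrib_left
    by (intro sum.cong) (auto simp: power_add algebra_simps)
  have inj_over: "inj_on ?over (overparts (L - 1) (N - 1))"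
  proof (rule inj_onI, clarify)
    fix mu ov mu' ov'
    assume "(mu, ov) \<in> overparts (L - 1) (N - 1)" "(mu', ov') \<in> overparts (L - 1) (N - 1)"
      and "add_mset L mu = add_mset L mu'" "insert L ov = insert L ov'"
    then show "mu = mu' \<and> ov = ov'"
      using below(2) by (metis Diff_insert_absorb add_mset_add_mset_same_iff)
  qed
  have weight_over: "?w (?over p) = q ^ L * (t * ?w p)" if "p \<in> overparts (L - 1) (N - 1)" for p
  proof -
    obtain mu ov where p: "p = (mu, ov)"
      by fastforce
    have "finite ov"
      using that p by (auto simp: overparts_def intro: finite_subset)
    then show ?thesis
      using below[of mu ov] that p by (simp add: power_add algebra_simps)
  qed
  have C: "sum ?w ?C = q ^ L * (t * overpart_gf q t (L - 1) (N - 1))"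
    unfolding sum.reindex[OF inj_over] overpart_gf_def sum_distrib_left
    by (intro sum.cong) (simp_all add: weight_over)
  have "sum ?w (?A \<union> ?B \<union> ?C) = sum ?w ?A + sum ?w ?B + sum ?w ?C"
    using overparts_split_largest_disjoint[OF \<open>0 < L\<close>, of N]
    by (simp add: sum.union_disjoint finite_overparts)
  then show ?thesis
    unfolding overpart_gf_def overparts_split_largest[OF assms] B C by (simp add: algebra_simps)
qed

section \<open>Pascal-type recurrences for the overpartition binomial\<close>

lemma ovbin_eq_overpart_gf: "0 \<le> b \<Longrightarrow> b \<le> a \<Longrightarrow> ovbin q t a b = overpart_gf q t (nat (a - b)) (nat b)"
  by (simp add: ovbin_def overpart_gf_def)

lemma ovbin_eq_0: "b < 0 \<or> a < b \<Longrightarrow> ovbin q t a b = 0"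
  by (auto simp: ovbin_def)

lemma ovbin_0_right: "0 \<le> a \<Longrightarrow> ovbin q t a 0 = 1"
  by (simp add: ovbin_eq_overpart_gf overpart_gf_def overparts_0_right)

lemma ovbin_diag: "0 \<le> a \<Longrightarrow> ovbin q t a a = 1"
  by (simp add: ovbin_eq_overpart_gf overpart_gf_def overparts_0_left)

lemma ovbin_rec_largest:
  fixes q t :: "'a::comm_ring_1"
  assumes "0 \<le> b" "b \<le> a" "1 \<le> a"
  shows "ovbin q t a b = ovbin q t (a - 1) b
           + q ^ nat (a - b) * (ovbin q t (a - 1) (b - 1) + t * ovbin q t (a - 2) (b - 1))"
proof -
  consider "b = 0" | "b = a" | "0 < b" "b < a"
    using assms by linarith
  then show ?thesis
  proof cases
    case 3
    then have "0 < nat (a - b)" "0 < nat b"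
      by auto
    from overpart_gf_rec[OF this, of q t] 3 show ?thesis
      by (simp add: ovbin_eq_overpart_gf nat_diff_distrib)
  qed (use assms in \<open>simp_all add: ovbin_0_right ovbin_diag ovbin_eq_0\<close>)
qed

text \<open>The factor \<open>q\<close> makes the recurrence valid also for \<open>a < b\<close>, where both sides vanish.\<close>

lemma ovbin_rec_largest_times_q:
  fixes q t :: "'a::comm_ring_1"
  assumes "1 \<le> b"
  shows "q * (ovbin q t a b - ovbin q t (a - 1) b)
           = q ^ nat (a - b + 1) * (ovbin q t (a - 1) (b - 1) + t * ovbin q t (a - 2) (b - 1))"
proof (cases "b \<le> a")
  case True
  then have "nat (a - b + 1) = Suc (nat (a - b))"
    by simp
  then show ?thesis
    using ovbin_rec_largest[of b a q t] True assms by (simp add: algebra_simps)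
qed (simp add: ovbin_eq_0)

lemma ovbin_rec_parts_step:
  fixes q t :: "'a::comm_ring_1"
  assumes "3 \<le> a" "1 \<le> b" "b < a"
    and rec_a1_b: "ovbin q t (a - 1) b - ovbin q t (a - 2) (b - 1)
                     = q ^ nat b * (ovbin q t (a - 2) b + t * ovbin q t (a - 3) (b - 1))"
    and rec_a1_b1: "ovbin q t (a - 1) (b - 1) - ovbin q t (a - 2) (b - 2)
                     = q ^ nat (b - 1) * (ovbin q t (a - 2) (b - 1) + t * ovbin q t (a - 3) (b - 2))"
    and rec_a2_b1: "ovbin q t (a - 2) (b - 1) - ovbin q t (a - 3) (b - 2)
                     = q ^ nat (b - 1) * (ovbin q t (a - 3) (b - 1) + t * ovbin q t (a - 4) (b - 2))"
  shows "ovbin q t a b - ovbin q t (a - 1) (b - 1)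
           = q ^ nat b * (ovbin q t (a - 1) b + t * ovbin q t (a - 2) (b - 1))"
proof -
  let ?P = "ovbin q t"
  define u where "u = q ^ nat (a - b - 1)"
  define v where "v = q ^ nat (b - 1)"
  have qu: "q ^ nat (a - b) = q * u" and qv: "q ^ nat b = q * v"
    using assms by (simp_all add: u_def v_def flip: power_Suc, simp_all add: Suc_nat_eq_nat_zadd1)
  have exps: "a - 1 - b = a - b - 1" "a - 2 - (b - 1) = a - b - 1" "a - 1 - (b - 1) = a - b"
    by simp_all
  have H1: "?P a b - ?P (a - 1) b = q * u * (?P (a - 1) (b - 1) + t * ?P (a - 2) (b - 1))"
    using ovbin_rec_largest[of b a q t] assms by (simp add: qu)
  have H2: "?P (a - 1) (b - 1) - ?P (a - 2) (b - 1) = q * u * (?P (a - 2) (b - 2) + t * ?P (a - 3) (b - 2))"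
    using ovbin_rec_largest[of "b - 1" "a - 1" q t] assms by (simp add: exps qu)
  have H3: "?P (a - 1) b - ?P (a - 2) b = u * (?P (a - 2) (b - 1) + t * ?P (a - 3) (b - 1))"
    using ovbin_rec_largest[of b "a - 1" q t] assms by (simp add: exps u_def)
  have H4: "?P (a - 2) (b - 1) - ?P (a - 3) (b - 1) = u * (?P (a - 3) (b - 2) + t * ?P (a - 4) (b - 2))"
    using ovbin_rec_largest[of "b - 1" "a - 2" q t] assms by (simp add: exps u_def)
  have "?P a b - ?P (a - 1) (b - 1) - q * v * (?P (a - 1) b + t * ?P (a - 2) (b - 1))
      = (?P a b - ?P (a - 1) b) - (?P (a - 1) (b - 1) - ?P (a - 2) (b - 1))
        - q * v * ((?P (a - 1) b - ?P (a - 2) b) + t * (?P (a - 2) (b - 1) - ?P (a - 3) (b - 1)))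
        + (?P (a - 1) b - ?P (a - 2) (b - 1) - q * v * (?P (a - 2) b + t * ?P (a - 3) (b - 1)))"
    by (simp add: algebra_simps)
  also have "\<dots> = q * u * ((?P (a - 1) (b - 1) - ?P (a - 2) (b - 2) - v * (?P (a - 2) (b - 1) + t * ?P (a - 3) (b - 2)))
                    + t * (?P (a - 2) (b - 1) - ?P (a - 3) (b - 2) - v * (?P (a - 3) (b - 1) + t * ?P (a - 4) (b - 2))))"
    unfolding H1 H2 H3 H4 rec_a1_b qv by (simp add: algebra_simps)
  also have "\<dots> = 0"
    unfolding rec_a1_b1 rec_a2_b1 v_def by simp
  finally show ?thesis
    by (simp add: qv)
qed

text \<open>At \<open>a = b = 0\<close> the recurrence would read \<open>1 = 0\<close>.\<close>

lemma ovbin_rec_parts: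
  fixes q t :: "'a::comm_ring_1"
  assumes "0 \<le> b" "1 \<le> a \<or> 1 \<le> b"
  shows "ovbin q t a b - ovbin q t (a - 1) (b - 1)
           = q ^ nat b * (ovbin q t (a - 1) b + t * ovbin q t (a - 2) (b - 1))"
  using assms
proof (induction "nat a" arbitrary: a b rule: less_induct)
  case less
  consider "b = 0" | "a \<le> b" | "a = 2" "b = 1" | "3 \<le> a" "1 \<le> b" "b < a"
    using less.prems by linarith
  then show ?case
  proof cases
    case 2
    then show ?thesis
      using less.prems by (cases "a = b") (simp_all add: ovbin_diag ovbin_eq_0)
  next
    case 3
    then show ?thesis
      using ovbin_rec_largest[of 1 2 q t] by (simp add: ovbin_diag ovbin_0_right ovbin_eq_0 algebra_simps)
  next
    case 4
    have "a - 1 - 1 = a - 2" "a - 1 - 2 = a - 3" "a - 2 - 1 = a - 3" "a - 2 - 2 = a - 4" "b - 1 - 1 = b - 2"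
      by simp_all
    with 4 less.hyps[of "a - 1" b] less.hyps[of "a - 1" "b - 1"] less.hyps[of "a - 2" "b - 1"]
    show ?thesis
      by (intro ovbin_rec_parts_step) simp_all
  qed (use less.prems in \<open>simp add: ovbin_0_right ovbin_eq_0\<close>)
qed

section \<open>The quotient of q-Pochhammer symbols\<close>

lemma qpoch_0 [simp]: "qpoch x q 0 = 1"
  by (simp add: qpoch_def)

lemma qpoch_Suc: "qpoch x q (Suc k) = qpoch x q k * (1 - x * q ^ k)"
  by (simp add: qpoch_def)

lemma qpoch_ratio_rec:
  fixes q t :: "'a::field"
  defines "R \<equiv> \<lambda>k. qpoch (- fps_const (t * q) * fps_X) (fps_const q) k
                     / qpoch (fps_const q * fps_X) (fps_const q) k"
  shows "(1 - fps_const (q ^ Suc j) * fps_X) * R (Suc j) = (1 + fps_const (t * q ^ Suc j) * fps_X) * R j"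
proof -
  let ?N = "qpoch (- fps_const (t * q) * fps_X) (fps_const q)"
  let ?D = "qpoch (fps_const q * fps_X) (fps_const q)"
  have unit: "is_unit (?D k)" for k
    by (induction k) (simp_all add: qpoch_Suc is_unit_mult_iff)
  then have R_times_D: "R k * ?D k = ?N k" for k
    by (simp add: R_def)
  have "(1 - fps_const (q ^ Suc j) * fps_X) * R (Suc j) * ?D j = R (Suc j) * ?D (Suc j)"
    by (simp add: qpoch_Suc algebra_simps)
  also have "\<dots> = ?N (Suc j)"
    by (rule R_times_D)
  also have "\<dots> = ?N j * (1 + fps_const (t * q ^ Suc j) * fps_X)"
    by (simp add: qpoch_Suc algebra_simps del: fps_const_neg)
  also have "\<dots> = (1 + fps_const (t * q ^ Suc j) * fps_X) * (R j * ?D j)"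
    by (subst R_times_D) (rule mult.commute)
  finally show ?thesis
    using unit[of j] by (auto simp flip: mult.assoc)
qed

section \<open>Telescoping\<close>

definition rhs_summand :: "'a::comm_ring_1 \<Rightarrow> 'a \<Rightarrow> (nat \<Rightarrow> 'a fps) \<Rightarrow> nat \<Rightarrow> nat \<Rightarrow> 'a fps" where
  "rhs_summand q t R n m =
       fps_const (ovbin q t (int n + int m - 1) (2 * int m)
                  + t * ovbin q t (int n + int m - 2) (2 * int m - 1))
         * fps_X ^ (2 * m) * fps_const (q ^ (2 * m\<^sup>2 + 2 * m)) * R m
     + fps_const (ovbin q t (int n + int m - 1) (2 * int m - 1))
         * fps_X ^ (2 * m - 1) * fps_const (q ^ (2 * m\<^sup>2 - m)) * R m
     + fps_const (ovbin q t (int n + int m - 2) (2 * int m - 2) * t)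
         * fps_X ^ (2 * m - 1) * fps_const (q ^ (2 * m\<^sup>2 - m)) * R (m - 1)"

definition telescope_term :: "'a::comm_ring_1 \<Rightarrow> 'a \<Rightarrow> (nat \<Rightarrow> 'a fps) \<Rightarrow> nat \<Rightarrow> nat \<Rightarrow> 'a fps" where
  "telescope_term q t R n m =
     fps_const (t * q ^ (2 * m\<^sup>2 - m)
                  * (ovbin q t (int n + int m - 2) (2 * int m - 2) - ovbin q t (int n + int m - 3) (2 * int m - 2))
                + q ^ (2 * m\<^sup>2 - 2 * m + n)
                  * (ovbin q t (int n + int m - 2) (2 * int m - 2) + t * ovbin q t (int n + int m - 3) (2 * int m - 2)))
       * fps_X ^ (2 * m - 1) * R (m - 1)"

text \<open>
  Used with \<open>z = X\<close>, \<open>s = R m\<close>, \<open>r = R (m - 1)\<close>, \<open>Q = q\<^sup>m\<close>, \<open>D = q\<^sup>n\<^sup>-\<^sup>m\<close>,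
  \<open>u = q\<^sup>2\<^sup>m\<^sup>-\<^sup>1\<close>; the letters \<open>a1, \<dots>, h\<close> stand for the binomials \<open>P(n + m - i, 2m - j)\<close>
  related by the recurrences of \<open>ovbin_telescope_relations\<close>.
\<close>

lemma telescope_ring_identity:
  fixes z r s t q Q u D a1 a1' a2' b b' g g' h :: "'a::comm_ring_1"
  assumes rel: "(1 - Q * z) * s = (1 + t * Q * z) * r"
    and square: "u * q = Q ^ 2"
    and rec1: "b - b' = D * (g + t * g')"
    and rec2: "b - g = u * (b' + t * g')"
    and rec3: "b' - g' = u * (a2' + t * h)"
    and rec4: "q * (a1 - a1') = D * (b' + t * a2')"
    and rec5: "q * (b' - a2') = D * (g' + t * h)"
  shows "(1 + t * Q * D * z) * ((a1' + t * a2') * Q ^ 3 * z * s + b' * s + t * g' * r)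
           - (1 - Q * D * z) * ((a1 + t * b') * Q ^ 3 * z * s + b * s + t * g * r)
         = (t * Q ^ 4 * q * (a1 - a1') + Q ^ 4 * D * (a1 + t * a1')) * z ^ 2 * s
           - (t * (g - g') + D * (g + t * g')) * r"
proof -
  define E where "E = D * (g + t * g')"
  define c1 where "c1 = Q ^ 3 * (a1 - a1') + t * Q ^ 3 * (b' - a2') - Q * D * ((b - g) + t * (b' - g'))"
  define c2 where "c2 = t * Q ^ 4 * (q * (a1 - a1') - D * (b' + t * a2'))"
  have "Q ^ 3 = Q * u * q"
    by (simp add: mult.assoc square power3_eq_cube power2_eq_square)
  then have "c1 = Q * u * (q * (a1 - a1')) + t * Q * u * (q * (b' - a2')) - Q * D * ((b - g) + t * (b' - g'))"
    unfolding c1_def by (simp add: algebra_simps)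
  also have "\<dots> = 0"
    unfolding rec2 rec3 rec4 rec5 by (simp add: algebra_simps)
  finally have c1: "c1 = 0" .
  have c2: "c2 = 0"
    unfolding c2_def rec4 by simp
  have "(1 - Q * D * z) * ((a1 + t * b') * Q ^ 3 * z * s + b * s + t * g * r)
          - (1 + t * Q * D * z) * ((a1' + t * a2') * Q ^ 3 * z * s + b' * s + t * g' * r)
          - ((t * (g - g') + D * (g + t * g')) * r - (t * Q ^ 4 * q * (a1 - a1') + Q ^ 4 * D * (a1 + t * a1')) * z ^ 2 * s)
      = ((b - b' - E) + c1 * z + c2 * z ^ 2) * s + E * ((1 - Q * z) * s - (1 + t * Q * z) * r)"
    unfolding E_def c1_def c2_def
    by (simp add: algebra_simps power2_eq_square power3_eq_cube eval_nat_numeral)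
  also have "\<dots> = 0"
    using rec1 c1 c2 rel by (simp add: E_def)
  finally show ?thesis
    by (simp add: algebra_simps)
qed

definition summand_scale :: "'a::comm_ring_1 \<Rightarrow> nat \<Rightarrow> 'a fps" where
  "summand_scale q m = fps_const (q ^ (2 * m\<^sup>2 - m)) * fps_X ^ (2 * m - 1)"

lemma rhs_summand_factored:
  fixes q t :: "'a::comm_ring_1"
  assumes "1 \<le> m"
  shows "rhs_summand q t R n m = summand_scale q m *
           ((fps_const (ovbin q t (int n + int m - 1) (2 * int m))
               + fps_const t * fps_const (ovbin q t (int n + int m - 2) (2 * int m - 1)))
              * fps_const (q ^ m) ^ 3 * fps_X * R m
            + fps_const (ovbin q t (int n + int m - 1) (2 * int m - 1)) * R m
            + fps_const t * fps_const (ovbin q t (int n + int m - 2) (2 * int m - 2)) * R (m - 1))"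
proof -
  have "2 * m\<^sup>2 + 2 * m = (2 * m\<^sup>2 - m) + m * 3"
    by (simp add: power2_eq_square)
  then have power: "q ^ (2 * m\<^sup>2 + 2 * m) = q ^ (2 * m\<^sup>2 - m) * (q ^ m) ^ 3"
    by (simp only: power_add power_mult)
  have X_power: "(fps_X :: 'a fps) ^ (2 * m) = fps_X ^ (2 * m - 1) * fps_X"
    by (rule power_minus_mult[symmetric]) (use assms in simp)
  show ?thesis
    unfolding rhs_summand_def summand_scale_def power X_power
    unfolding fps_const_add[symmetric] fps_const_mult[symmetric] fps_const_power[symmetric]
    by (simp only: algebra_simps)
qed

lemma telescope_term_factored:
  fixes q t :: "'a::comm_ring_1"
  assumes "m \<le> n"
  shows "telescope_term q t R n m = summand_scale q m *
           ((fps_const t * (fps_const (ovbin q t (int n + int m - 2) (2 * int m - 2))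
                             - fps_const (ovbin q t (int n + int m - 3) (2 * int m - 2)))
             + fps_const (q ^ (n - m)) * (fps_const (ovbin q t (int n + int m - 2) (2 * int m - 2))
                             + fps_const t * fps_const (ovbin q t (int n + int m - 3) (2 * int m - 2))))
            * R (m - 1))"
proof -
  have "2 * m\<^sup>2 - 2 * m + n = (2 * m\<^sup>2 - m) + (n - m)"
    using assms by (simp add: power2_eq_square)
  then have power: "q ^ (2 * m\<^sup>2 - 2 * m + n) = q ^ (2 * m\<^sup>2 - m) * q ^ (n - m)"
    by (simp only: power_add)
  show ?thesis
    unfolding telescope_term_def summand_scale_def power
    unfolding fps_const_add[symmetric] fps_const_sub[symmetric] fps_const_mult[symmetric] fps_const_power[symmetric]
    by (simp only: algebra_simps)
qed

lemma telescope_term_Suc_factored: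
  fixes q t :: "'a::comm_ring_1"
  assumes "1 \<le> m" "m \<le> n"
  shows "telescope_term q t R n (Suc m) = summand_scale q m *
           ((fps_const t * fps_const (q ^ m) ^ 4 * fps_const q
               * (fps_const (ovbin q t (int n + int m - 1) (2 * int m))
                  - fps_const (ovbin q t (int n + int m - 2) (2 * int m)))
             + fps_const (q ^ m) ^ 4 * fps_const (q ^ (n - m))
               * (fps_const (ovbin q t (int n + int m - 1) (2 * int m))
                  + fps_const t * fps_const (ovbin q t (int n + int m - 2) (2 * int m))))
            * fps_X ^ 2 * R m)"
proof -
  have "2 * (Suc m)\<^sup>2 - Suc m = (2 * m\<^sup>2 - m) + m * 4 + 1"
    "2 * (Suc m)\<^sup>2 - 2 * Suc m + n = (2 * m\<^sup>2 - m) + m * 4 + (n - m)"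
    "2 * Suc m - 1 = (2 * m - 1) + 2"
    using assms by (simp_all add: power2_eq_square)
  then have powers: "q ^ (2 * (Suc m)\<^sup>2 - Suc m) = q ^ (2 * m\<^sup>2 - m) * (q ^ m) ^ 4 * q"
    "q ^ (2 * (Suc m)\<^sup>2 - 2 * Suc m + n) = q ^ (2 * m\<^sup>2 - m) * (q ^ m) ^ 4 * q ^ (n - m)"
    "fps_X ^ (2 * Suc m - 1) = fps_X ^ (2 * m - 1) * (fps_X :: 'a fps) ^ 2"
    by (simp_all only: power_add power_mult power_one_right)
  have shifts: "int n + int (Suc m) - 2 = int n + int m - 1" "int n + int (Suc m) - 3 = int n + int m - 2"
    "2 * int (Suc m) - 2 = 2 * int m"
    by simp_all
  show ?thesis
    unfolding telescope_term_def summand_scale_def diff_Suc_1 powers shifts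
    unfolding fps_const_add[symmetric] fps_const_sub[symmetric] fps_const_mult[symmetric] fps_const_power[symmetric]
    by (simp only: algebra_simps)
qed

lemma ovbin_telescope_relations:
  fixes q t :: "'a::comm_ring_1"
  assumes "1 \<le> m" "m \<le> n"
  defines "P \<equiv> \<lambda>a b. ovbin q t (int n + int m - a) (2 * int m - b)"
  shows "P 1 1 - P 2 1 = q ^ (n - m) * (P 2 2 + t * P 3 2)"
    and "P 1 1 - P 2 2 = q ^ (2 * m - 1) * (P 2 1 + t * P 3 2)"
    and "P 2 1 - P 3 2 = q ^ (2 * m - 1) * (P 3 1 + t * P 4 2)"
    and "q * (P 1 0 - P 2 0) = q ^ (n - m) * (P 2 1 + t * P 3 1)"
    and "q * (P 2 1 - P 3 1) = q ^ (n - m) * (P 3 2 + t * P 4 2)"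
proof -
  have shifts: "int n + int m - 1 - 1 = int n + int m - 2" "int n + int m - 1 - 2 = int n + int m - 3"
    "int n + int m - 2 - 1 = int n + int m - 3" "int n + int m - 2 - 2 = int n + int m - 4"
    "2 * int m - 1 - 1 = 2 * int m - 2" "2 * int m - 0 = 2 * int m" "2 * int m - 0 - 1 = 2 * int m - 1"
    by simp_all
  have exps: "nat (int n - int m) = n - m" "nat (2 * int m - 1) = 2 * m - 1"
    using assms by simp_all
  show "P 1 1 - P 2 1 = q ^ (n - m) * (P 2 2 + t * P 3 2)"
    using ovbin_rec_largest[of "2 * int m - 1" "int n + int m - 1" q t] assms
    by (simp add: P_def shifts exps)
  show "P 1 1 - P 2 2 = q ^ (2 * m - 1) * (P 2 1 + t * P 3 2)"
    using ovbin_rec_parts[of "2 * int m - 1" "int n + int m - 1" q t] assms(1)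
    by (simp add: P_def shifts exps)
  show "P 2 1 - P 3 2 = q ^ (2 * m - 1) * (P 3 1 + t * P 4 2)"
    using ovbin_rec_parts[of "2 * int m - 1" "int n + int m - 2" q t] assms(1)
    by (simp add: P_def shifts exps)
  show "q * (P 1 0 - P 2 0) = q ^ (n - m) * (P 2 1 + t * P 3 1)"
    using ovbin_rec_largest_times_q[of "2 * int m" q t "int n + int m - 1"] assms(1)
    by (simp add: P_def shifts exps)
  show "q * (P 2 1 - P 3 1) = q ^ (n - m) * (P 3 2 + t * P 4 2)"
    using ovbin_rec_largest_times_q[of "2 * int m - 1" q t "int n + int m - 2"] assms(1)
    by (simp add: P_def shifts exps)
qed

lemma rhs_summand_telescope:
  fixes q t :: "'a::comm_ring_1" and R :: "nat \<Rightarrow> 'a fps"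
  assumes rec: "\<And>j. (1 - fps_const (q ^ Suc j) * fps_X) * R (Suc j)
                     = (1 + fps_const (t * q ^ Suc j) * fps_X) * R j"
    and "1 \<le> m" "m \<le> n"
  shows "(1 + fps_const (t * q ^ n) * fps_X) * rhs_summand q t R (n - 1) m
           - (1 - fps_const (q ^ n) * fps_X) * rhs_summand q t R n m
         = telescope_term q t R n (Suc m) - telescope_term q t R n m"
proof -
  let ?C = "fps_const :: 'a \<Rightarrow> 'a fps" and ?X = "fps_X :: 'a fps"
  let ?P = "\<lambda>a b. ?C (ovbin q t (int n + int m - a) (2 * int m - b))"
  let ?Q = "?C (q ^ m)" and ?D = "?C (q ^ (n - m))"
  have rel: "(1 - ?Q * ?X) * R m = (1 + ?C t * ?Q * ?X) * R (m - 1)"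
    using rec[of "m - 1"] \<open>1 \<le> m\<close> by simp
  have "q ^ (2 * m - 1) * q = q ^ (2 * m)"
    by (rule power_minus_mult) (use \<open>1 \<le> m\<close> in simp)
  then have "q ^ (2 * m - 1) * q = (q ^ m) ^ 2"
    by (simp only: power_even_eq)
  then have square: "?C (q ^ (2 * m - 1)) * ?C q = ?Q ^ 2"
    by (simp only: fps_const_mult fps_const_power)
  have rels: "?P 1 1 - ?P 2 1 = ?D * (?P 2 2 + ?C t * ?P 3 2)"
    "?P 1 1 - ?P 2 2 = ?C (q ^ (2 * m - 1)) * (?P 2 1 + ?C t * ?P 3 2)"
    "?P 2 1 - ?P 3 2 = ?C (q ^ (2 * m - 1)) * (?P 3 1 + ?C t * ?P 4 2)"
    "?C q * (?P 1 0 - ?P 2 0) = ?D * (?P 2 1 + ?C t * ?P 3 1)"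
    "?C q * (?P 2 1 - ?P 3 1) = ?D * (?P 3 2 + ?C t * ?P 4 2)"
    using ovbin_telescope_relations[OF assms(2,3), of q t] by simp_all
  have factor: "x * (k * y) - x' * (k * y') = k * (x * y - x' * y')" for x x' k y y' :: "'a fps"
    by (simp add: algebra_simps)
  have split_n: "?C (q ^ n) = ?Q * ?D" "?C (t * q ^ n) = ?C t * ?Q * ?D"
    using \<open>m \<le> n\<close> by (simp_all add: mult.assoc flip: power_add)
  have pred: "int (n - 1) + int m - 1 = int n + int m - 2" "int (n - 1) + int m - 2 = int n + int m - 3"
    using assms(2,3) by simp_all
  have "(1 + ?C (t * q ^ n) * ?X) * rhs_summand q t R (n - 1) m - (1 - ?C (q ^ n) * ?X) * rhs_summand q t R n m
      = summand_scale q m *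
        ((1 + ?C t * ?Q * ?D * ?X) * ((?P 2 0 + ?C t * ?P 3 1) * ?Q ^ 3 * ?X * R m + ?P 2 1 * R m + ?C t * ?P 3 2 * R (m - 1))
         - (1 - ?Q * ?D * ?X) * ((?P 1 0 + ?C t * ?P 2 1) * ?Q ^ 3 * ?X * R m + ?P 1 1 * R m + ?C t * ?P 2 2 * R (m - 1)))"
    unfolding rhs_summand_factored[OF \<open>1 \<le> m\<close>] split_n pred diff_zero
    by (rule factor)
  also have "\<dots> = summand_scale q m *
        ((?C t * ?Q ^ 4 * ?C q * (?P 1 0 - ?P 2 0) + ?Q ^ 4 * ?D * (?P 1 0 + ?C t * ?P 2 0)) * ?X ^ 2 * R m
         - (?C t * (?P 2 2 - ?P 3 2) + ?D * (?P 2 2 + ?C t * ?P 3 2)) * R (m - 1))"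
    by (simp only: telescope_ring_identity[OF rel square rels])
  also have "\<dots> = telescope_term q t R n (Suc m) - telescope_term q t R n m"
    unfolding telescope_term_factored[OF \<open>m \<le> n\<close>] telescope_term_Suc_factored[OF assms(2,3)]
    by (simp only: right_diff_distrib diff_zero)
  finally show ?thesis .
qed

lemma rhs_summand_eq_0: "n < m \<Longrightarrow> rhs_summand q t R n m = 0"
  by (simp add: rhs_summand_def ovbin_eq_0)

lemma telescope_term_Suc_self: "telescope_term q t R n (Suc n) = 0"
  by (simp add: telescope_term_def ovbin_eq_0)

lemma telescope_term_1:
  assumes "0 < n"
  shows "telescope_term q t R n 1 = fps_const (q ^ n) * fps_X * R 0 + fps_const (t * q ^ n) * fps_X * R 0"
proof (cases "n = 1")
  case False
  with assms show ?thesis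
    by (simp add: telescope_term_def ovbin_0_right algebra_simps flip: fps_const_add)
qed (simp add: telescope_term_def ovbin_0_right ovbin_eq_0 algebra_simps flip: fps_const_add)

lemma one_minus_fps_const_X_neq_0: "1 - fps_const c * fps_X \<noteq> (0 :: 'a::comm_ring_1 fps)"
proof
  assume "1 - fps_const c * fps_X = (0 :: 'a fps)"
  then have "fps_nth (1 - fps_const c * fps_X) 0 = (0 :: 'a)"
    by simp
  then show False
    by simp
qed

lemma rhs_expansion:
  fixes q t :: "'a::idom" and R :: "nat \<Rightarrow> 'a fps"
  assumes rec: "\<And>j. (1 - fps_const (q ^ Suc j) * fps_X) * R (Suc j)
                     = (1 + fps_const (t * q ^ Suc j) * fps_X) * R j"
    and "R 0 = 1"
  shows "R n = 1 + (\<Sum>m = 1..n. rhs_summand q t R n m)"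
proof (induction n)
  case 0
  show ?case
    using \<open>R 0 = 1\<close> by simp
next
  case (Suc k)
  let ?e = "1 - fps_const (q ^ Suc k) * fps_X" and ?e' = "1 + fps_const (t * q ^ Suc k) * fps_X"
  let ?S = "\<lambda>n. 1 + (\<Sum>m = 1..Suc k. rhs_summand q t R n m)"
  let ?T = "telescope_term q t R (Suc k)"
  have "?e' * ?S k - ?e * ?S (Suc k)
      = ?e' - ?e + (\<Sum>m = 1..Suc k. ?e' * rhs_summand q t R k m - ?e * rhs_summand q t R (Suc k) m)"
    unfolding sum_subtractf sum_distrib_left[symmetric] by (simp add: algebra_simps)
  also have "(\<Sum>m = 1..Suc k. ?e' * rhs_summand q t R k m - ?e * rhs_summand q t R (Suc k) m)
      = (\<Sum>m = 1..Suc k. ?T (Suc m) - ?T m)"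
    using rhs_summand_telescope[OF rec, of _ "Suc k"] by (intro sum.cong) auto
  also have "\<dots> = ?T (Suc (Suc k)) - ?T 1"
    by (rule sum_Suc_diff) simp
  also have "?e' - ?e + (?T (Suc (Suc k)) - ?T 1) = 0"
    using \<open>R 0 = 1\<close> telescope_term_1[of "Suc k" q t R] by (simp add: telescope_term_Suc_self algebra_simps)
  finally have "?e * ?S (Suc k) = ?e' * ?S k"
    by simp
  also have "?S k = R k"
    using Suc.IH rhs_summand_eq_0[of k "Suc k"] by simp
  also have "?e' * R k = ?e * R (Suc k)"
    by (rule rec[symmetric])
  finally have "?e * ?S (Suc k) = ?e * R (Suc k)" .
  then show ?case
    by (simp only: mult_left_cancel[OF one_minus_fps_const_X_neq_0] eq_commute)
qed

theorem theorem4p3: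
  fixes q t :: "'a::field" and n :: nat
  assumes "n \<ge> 1"
  defines "R \<equiv> (\<lambda>k::nat. qpoch (- fps_const (t * q) * fps_X) (fps_const q) k
                         / qpoch (fps_const q * fps_X) (fps_const q) k)"
  shows "R n =
     1
     + (\<Sum>m = 1..n - 1.
          fps_const (ovbin q t (int n + int m - 1) (2 * int m)
                     + t * ovbin q t (int n + int m - 2) (2 * int m - 1))
          * fps_X ^ (2 * m) * fps_const (q ^ (2 * m\<^sup>2 + 2 * m)) * R m)
     + (\<Sum>m = 1..n.
          fps_const (ovbin q t (int n + int m - 1) (2 * int m - 1))
          * fps_X ^ (2 * m - 1) * fps_const (q ^ (2 * m\<^sup>2 - m)) * R m)
     + (\<Sum>m = 1..n.
          fps_const (ovbin q t (int n + int m - 2) (2 * int m - 2) * t)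
          * fps_X ^ (2 * m - 1) * fps_const (q ^ (2 * m\<^sup>2 - m)) * R (m - 1))"
proof -
  have "(1 - fps_const (q ^ Suc j) * fps_X) * R (Suc j) = (1 + fps_const (t * q ^ Suc j) * fps_X) * R j" for j
    unfolding R_def by (rule qpoch_ratio_rec)
  then have "R n = 1 + (\<Sum>m = 1..n. rhs_summand q t R n m)"
    by (rule rhs_expansion) (simp add: R_def)
  then show ?thesis
    using assms unfolding rhs_summand_def sum.distrib
    by (cases n) (simp_all add: ovbin_eq_0 add.assoc)
qed

end
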